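(* Let $H=F[1/t]\subseteq\mathbb{Q}[t,1/t]$. Then: (a) $H$ is a Hopf subalgebra of the Hopf algebra $\mathbb{Q}[t,1/t]$ with coproduct $\Delta(t)=t\otimes t$. (b) $H$ is a binomial ring; it is the free binomial ring on a unit.
   Context: $F\subseteq\mathbb{Q}[t]$ is the ring of numerical polynomials (polynomials $f$ with $f(n)\in\mathbb{Z}$ for all integers $n\gg0$), with $\mathbb{Z}$-basis $\binom tn$, $n\ge 0$; $H=F[1/t]$ is its localization at $t$, a subring of $\mathbb{Q}[t,1/t]$. A binomial ring is a subring $R$ of a $\mathbb{Q}$-algebra which is closed under the operations $r\mapsto\binom rn=r(r-1)\cdots(r-n+1)/n!$ for all $n\ge0$. "Free binomial ring on a unit" means: for every binomial ring $R$ and every unit $r\in R$ there is a unique ring homomorphism $H\to R$ sending $t$ to $r$. The Hopf algebra structure on $\mathbb{Q}[t,1/t]$ has $\Delta(t)=t\otimes t$, counit $t\mapsto1$ and antipode $t\mapsto t^{-1}$; $F\otimes F$ is identified with the ring of numerical polynomials in $\mathbb{Q}[t_1,t_2]\cong\mathbb{Q}[t]\otimes\mathbb{Q}[t]$. *)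

theory Defs
  imports "HOL-Computational_Algebra.Formal_Laurent_Series"
begin

(* Q[t,1/t] is modelled as the Laurent polynomials inside the formal Laurent series
   rat fls (t = fls_X, 1/t = fls_X_inv). *)
definition laurent_polys :: "rat fls set" where
  "laurent_polys = {f. finite {n. fls_nth f n \<noteq> 0}}"

definition numerical_polys :: "rat poly set" where
  "numerical_polys = {p. \<exists>N::int. \<forall>n::int. n \<ge> N \<longrightarrow> poly p (of_int n) \<in> \<int>}"

definition poly_to_laurent :: "rat poly \<Rightarrow> rat fls" where
  "poly_to_laurent p = fps_to_fls (fps_of_poly p)"

definition H_ring :: "rat fls set" where
  "H_ring = {poly_to_laurent p * fls_X_inv ^ k | p k. p \<in> numerical_polys}"

(* Q[t,1/t] (x) Q[t,1/t] = Q[t1^{+-1}, t2^{+-1}], represented by coefficient functions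
   (coefficient of t1^i t2^j) *)
type_synonym laurent2 = "int \<times> int \<Rightarrow> rat"

definition tensor :: "rat fls \<Rightarrow> rat fls \<Rightarrow> laurent2" where
  "tensor f g = (\<lambda>(i, j). fls_nth f i * fls_nth g j)"

(* coproduct: the ring map with Delta(t) = t (x) t, i.e. t^n |-> t1^n t2^n *)
definition coprod :: "rat fls \<Rightarrow> laurent2" where
  "coprod f = (\<lambda>(i, j). if i = j then fls_nth f i else 0)"

(* counit: t |-> 1 *)
definition counit :: "rat fls \<Rightarrow> rat" where
  "counit f = (\<Sum>n \<in> {n. fls_nth f n \<noteq> 0}. fls_nth f n)"

(* antipode: t |-> 1/t *)
definition antipode :: "rat fls \<Rightarrow> rat fls" where
  "antipode f = Abs_fls (\<lambda>n. fls_nth f (- n))"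

(* image of S (x)_Z S in Q[t,1/t] (x)_Q Q[t,1/t]: finite sums of elementary tensors *)
definition tensor_square :: "rat fls set \<Rightarrow> laurent2 set" where
  "tensor_square S = {x. \<exists>(I::nat set) a b. finite I \<and> (\<forall>i\<in>I. a i \<in> S \<and> b i \<in> S) \<and>
                         x = (\<lambda>ij. \<Sum>i\<in>I. tensor (a i) (b i) ij)}"

definition subring_of :: "'a::comm_ring_1 set \<Rightarrow> bool" where
  "subring_of S \<longleftrightarrow> 0 \<in> S \<and> 1 \<in> S \<and>
     (\<forall>x\<in>S. \<forall>y\<in>S. x + y \<in> S \<and> x * y \<in> S \<and> - x \<in> S)"

definition hopf_subalgebra :: "rat fls set \<Rightarrow> bool" where
  "hopf_subalgebra S \<longleftrightarrow> S \<subseteq> laurent_polys \<and> subring_of S \<and>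
     (\<forall>f\<in>S. coprod f \<in> tensor_square S) \<and>
     (\<forall>f\<in>S. counit f \<in> \<int>) \<and>
     (\<forall>f\<in>S. antipode f \<in> S)"

definition Q_algebra :: "'a::comm_ring_1 itself \<Rightarrow> bool" where
  "Q_algebra _ \<longleftrightarrow> (\<forall>n::nat. n > 0 \<longrightarrow> (\<exists>u::'a. of_nat n * u = 1))"

definition binom :: "'a::comm_ring_1 \<Rightarrow> nat \<Rightarrow> 'a" where
  "binom r n = (\<Prod>i<n. r - of_nat i) * (THE u. of_nat (fact n) * u = (1::'a))"

definition binomial_ring :: "'a::comm_ring_1 set \<Rightarrow> bool" where
  "binomial_ring R \<longleftrightarrow> subring_of R \<and> (\<forall>r\<in>R. \<forall>n. binom r n \<in> R)"

definition ring_hom_on :: "'a::comm_ring_1 set \<Rightarrow> 'b::comm_ring_1 set \<Rightarrow> ('a \<Rightarrow> 'b) \<Rightarrow> bool" where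
  "ring_hom_on A B \<phi> \<longleftrightarrow> (\<forall>x\<in>A. \<phi> x \<in> B) \<and> \<phi> 1 = 1 \<and>
     (\<forall>x\<in>A. \<forall>y\<in>A. \<phi> (x + y) = \<phi> x + \<phi> y \<and> \<phi> (x * y) = \<phi> x * \<phi> y)"

end

(*
  Every element of H is q / t^k with q integer-valued: a numerical polynomial has integral
  Newton coefficients, hence integral values everywhere.  All structure maps preserve this
  shape.  The counit gives q(1); the antipode gives t^k q(1/t), whose numerator becomes
  integer-valued after multiplication by t^(d!), d = deg q; the coproduct is
  q(t1 t2) = sum_i binom(t1, i) G_i(t2), where G_i(y) is the i-th Newton coefficient of
  x |-> q(x y).  The binomial coefficients of q / t^k are again of this shape, the key
  integrality fact being that n! divides b^(n!) prod_(j<n) (a + j b).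

  A homomorphism H -> R with t |-> r must send binom(t, i) to binom(r, i), hence q / t^k to
  q(r) r^(-k), computed through the Newton expansion of q; conversely this formula is
  well defined, multiplicative and additive, and lands in R because q is an integer
  combination of binomial polynomials.
*)

theory Submission
  imports Defs "HOL-Number_Theory.Cong" "HOL.Binomial_Plus"
begin

unbundle fps_syntax


lemma multiplicity_fact_le_fact:
  fixes q :: int
  assumes "prime q"
  shows "multiplicity q (fact n :: int) \<le> fact n"
proof -
  define v where "v = multiplicity q (fact n :: int)"
  have "q ^ v \<le> fact n"
    unfolding v_def by (rule zdvd_imp_le[OF multiplicity_dvd]) (simp add: fact_gt_zero)
  moreover have "int v < 2 ^ v"
    by (metis less_exp of_nat_less_iff of_nat_numeral of_nat_power)
  moreover have "(2::int) ^ v \<le> q ^ v"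
    using prime_ge_2_int[OF assms] by (simp add: power_mono)
  ultimately have "int v < fact n" by linarith
  thus ?thesis unfolding v_def by (metis of_nat_fact of_nat_less_imp_less less_imp_le)
qed

text \<open>Primes dividing \<open>b\<close> are absorbed by \<open>b ^ n!\<close>; modulo a power of any other prime, \<open>b\<close> is
  invertible and the product becomes \<open>b ^ n\<close> times a rising factorial, which is divisible by \<open>n!\<close>.\<close>

lemma fact_dvd_power_mult_prod_arith_prog:
  fixes a b :: int
  shows "fact n dvd b ^ fact n * (\<Prod>j<n. a + int j * b)"
proof (cases "b ^ fact n * (\<Prod>j<n. a + int j * b) = 0")
  case True
  then show ?thesis by (simp only: dvd_0_right)
next
  case False
  define X where "X = b ^ fact n * (\<Prod>j<n. a + int j * b)"
  have "X \<noteq> 0" "b \<noteq> 0" using False by (auto simp: X_def)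
  show ?thesis unfolding X_def[symmetric]
  proof (rule multiplicity_le_imp_dvd)
    fix q :: int assume q: "prime q"
    show "multiplicity q (fact n) \<le> multiplicity q X"
    proof (cases "q dvd b")
      case True
      have "multiplicity q (b ^ fact n) \<le> multiplicity q X"
        using \<open>X \<noteq> 0\<close> by (intro dvd_imp_multiplicity_le) (simp_all add: X_def)
      moreover have "multiplicity q (b ^ fact n) = fact n * multiplicity q b"
        using q \<open>b \<noteq> 0\<close> by (intro prime_elem_multiplicity_power_distrib) auto
      moreover have "multiplicity q b \<ge> 1"
        using True q \<open>b \<noteq> 0\<close> by (intro multiplicity_geI) auto
      ultimately show ?thesis using multiplicity_fact_le_fact[OF q, of n]
        by (metis dual_order.trans mult.right_neutral mult_le_mono2)
    next
      case False
      define e where "e = multiplicity q (fact n :: int)"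
      have "coprime b (q ^ e)"
        using False q by (metis coprime_commute coprime_power_right_iff prime_imp_coprime)
      then obtain u where u: "[b * u = 1] (mod q ^ e)"
        using cong_solve_coprime_int by blast
      have "[(\<Prod>j<n. a + int j * b) = (\<Prod>j<n. b * (a * u + int j))] (mod q ^ e)"
      proof (rule cong_prod)
        fix j
        have "[a * (b * u) + int j * b = a * 1 + int j * b] (mod q ^ e)"
          using u by (intro cong_add cong_scalar_left cong_refl)
        thus "[a + int j * b = b * (a * u + int j)] (mod q ^ e)"
          by (simp add: algebra_simps cong_sym)
      qed
      moreover have "(\<Prod>j<n. b * (a * u + int j)) = b ^ n * pochhammer (a * u) n"
        by (simp add: prod.distrib pochhammer_prod atLeast0LessThan)
      moreover have "q ^ e dvd b ^ n * pochhammer (a * u) n"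
        using multiplicity_dvd[of q "fact n :: int"] fact_dvd_pochhammer[of n "a * u"]
        unfolding e_def by (meson dvd_mult dvd_trans)
      ultimately have "q ^ e dvd X"
        unfolding X_def by (metis cong_dvd_iff dvd_mult)
      thus ?thesis unfolding e_def[symmetric] using q \<open>X \<noteq> 0\<close>
        by (intro multiplicity_geI) auto
    qed
  qed simp
qed

lemma power_mult_prod_arith_prog_div_fact_Ints:
  fixes a b :: int
  shows "of_int b ^ fact n * (\<Prod>j<n. of_int a + of_nat j * of_int b) / fact n
           \<in> (\<int> :: 'a::field_char_0 set)"
proof -
  have "of_int b ^ fact n * (\<Prod>j<n. of_int a + of_nat j * of_int b) / fact n
      = (of_int (b ^ fact n * (\<Prod>j<n. a + int j * b) div fact n) :: 'a)"
    by (subst of_int_div[OF fact_dvd_power_mult_prod_arith_prog]) (simp add: of_int_prod)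
  thus ?thesis by simp
qed


section \<open>Forward differences and the Newton expansion\<close>

definition fwd_diff :: "'a::field_char_0 poly \<Rightarrow> 'a poly" where
  "fwd_diff p = pcompose p [:1, 1:] - p"

definition binom_poly :: "nat \<Rightarrow> 'a::field_char_0 poly" where
  "binom_poly i = smult (1 / fact i) (\<Prod>j<i. [:- of_nat j, 1:])"

lemma poly_fwd_diff [simp]: "poly (fwd_diff p) x = poly p (x + 1) - poly p x"
  by (simp add: fwd_diff_def poly_pcompose add.commute)

lemma poly_binom_poly [simp]: "poly (binom_poly i) x = x gchoose i"
  by (simp add: binom_poly_def gbinomial_prod_rev poly_prod atLeast0LessThan)

lemma fwd_diff_diff: "fwd_diff (p - q) = fwd_diff p - fwd_diff q"
  by (simp add: fwd_diff_def pcompose_diff)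

lemma fwd_diff_sum_smult:
  "fwd_diff (\<Sum>i\<in>A. smult (c i) (f i)) = (\<Sum>i\<in>A. smult (c i) (fwd_diff (f i)))"
  by (induct A rule: infinite_finite_induct)
    (simp_all add: fwd_diff_def pcompose_add pcompose_smult smult_diff_right)

lemma funpow_fwd_diff_sum_smult:
  "(fwd_diff ^^ n) (\<Sum>i\<in>A. smult (c i) (f i)) = (\<Sum>i\<in>A. smult (c i) ((fwd_diff ^^ n) (f i)))"
  by (induct n) (simp_all add: fwd_diff_sum_smult)

lemma fwd_diff_binom_poly_Suc: "fwd_diff (binom_poly (Suc i)) = binom_poly i"
  by (rule poly_eq_poly_eq_iff[THEN iffD1]) (simp add: gbinomial_Suc_Suc fun_eq_iff)

lemma fwd_diff_binom_poly_0: "fwd_diff (binom_poly 0) = 0"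
  by (rule poly_eq_poly_eq_iff[THEN iffD1]) (simp add: fun_eq_iff)

lemma degree_fwd_diff: "degree (fwd_diff p) \<le> degree p - 1"
proof (cases "degree p = 0")
  case True
  then obtain c where "p = [:c:]" by (metis degree_eq_zeroE)
  then show ?thesis by (simp add: fwd_diff_def)
next
  case False
  have dc: "degree (pcompose p [:1, 1:]) = degree p" by (simp add: degree_pcompose)
  have "coeff (fwd_diff p) (degree p) = 0"
    using lead_coeff_comp[of "[:1, 1:]" p] dc by (simp add: fwd_diff_def)
  moreover have "degree (fwd_diff p) \<le> degree p"
    unfolding fwd_diff_def using dc by (metis degree_diff_le order.refl)
  ultimately have "degree (fwd_diff p) < degree p \<or> fwd_diff p = 0"
    by (metis le_neq_implies_less leading_coeff_0_iff)
  then show ?thesis using False by auto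
qed

text \<open>If \<open>\<Delta> h = 0\<close> then \<open>h\<close> agrees with \<open>h(0) = 0\<close> at all naturals, so it has infinitely
  many roots.\<close>

lemma fwd_diff_eq_0_imp_eq_0:
  fixes h :: "'a::field_char_0 poly"
  assumes "fwd_diff h = 0" "poly h 0 = 0"
  shows "h = 0"
proof (rule ccontr)
  assume "h \<noteq> 0"
  have "poly h (of_nat n) = 0" for n
  proof (induct n)
    case (Suc n)
    have "poly (fwd_diff h) (of_nat n) = 0" using assms by simp
    then show ?case using Suc by (simp add: add.commute)
  qed (use assms in simp)
  hence "range (of_nat :: nat \<Rightarrow> 'a) \<subseteq> {x. poly h x = 0}" by auto
  hence "finite (range (of_nat :: nat \<Rightarrow> 'a))"
    using poly_roots_finite[OF \<open>h \<noteq> 0\<close>] finite_subset by blast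
  thus False by (metis finite_imageD inj_of_nat infinite_UNIV_nat)
qed

theorem newton_expansion:
  "degree f \<le> D \<Longrightarrow> f = (\<Sum>i\<le>D. smult (poly ((fwd_diff ^^ i) f) 0) (binom_poly i))"
proof (induct D arbitrary: f)
  case 0
  then obtain c where "f = [:c:]" by (metis degree_eq_zeroE le_zero_eq)
  then show ?case by (simp add: binom_poly_def)
next
  case (Suc D)
  have IH: "fwd_diff f = (\<Sum>i\<le>D. smult (poly ((fwd_diff ^^ i) (fwd_diff f)) 0) (binom_poly i))"
    using degree_fwd_diff[of f] Suc by (intro Suc.hyps) linarith
  define h where "h = f - (\<Sum>i\<le>Suc D. smult (poly ((fwd_diff ^^ i) f) 0) (binom_poly i))"
  have "fwd_diff h = fwd_diff f
      - (\<Sum>i\<le>Suc D. smult (poly ((fwd_diff ^^ i) f) 0) (fwd_diff (binom_poly i)))"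
    unfolding h_def fwd_diff_diff fwd_diff_sum_smult ..
  also have "(\<Sum>i\<le>Suc D. smult (poly ((fwd_diff ^^ i) f) 0) (fwd_diff (binom_poly i)))
      = (\<Sum>i\<le>D. smult (poly ((fwd_diff ^^ i) (fwd_diff f)) 0) (binom_poly i))"
    by (subst sum.atMost_Suc_shift)
      (simp add: fwd_diff_binom_poly_0 fwd_diff_binom_poly_Suc funpow_Suc_right del: funpow.simps)
  finally have "fwd_diff h = 0" using IH by simp
  moreover have "poly h 0 = 0"
    by (simp add: h_def poly_sum gbinomial_0_left sum.atMost_Suc_shift del: sum.atMost_Suc)
  ultimately have "h = 0" by (rule fwd_diff_eq_0_imp_eq_0)
  then show ?case by (simp add: h_def)
qed


section \<open>Integer-valued polynomials\<close>

definition int_valued_polys :: "rat poly set" where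
  "int_valued_polys = {p. \<forall>n::int. poly p (of_int n) \<in> \<int>}"

lemma int_valued_polysI: "(\<And>n::int. poly p (of_int n) \<in> \<int>) \<Longrightarrow> p \<in> int_valued_polys"
  by (simp add: int_valued_polys_def)

lemma int_valued_polysD: "p \<in> int_valued_polys \<Longrightarrow> poly p (of_int n) \<in> \<int>"
  by (simp add: int_valued_polys_def)

lemma of_int_gchoose_Ints: "((of_int z :: 'a::field_char_0) gchoose i) \<in> \<int>"
proof (cases "z \<ge> 0")
  case True
  then have "(of_int z :: 'a) gchoose i = of_nat (nat z choose i)"
    by (simp add: binomial_gbinomial)
  then show ?thesis by simp
next
  case False
  then have "(of_int z :: 'a) gchoose i = (-1) ^ i * of_nat (nat (int i - z - 1) choose i)"
    by (simp add: gbinomial_negated_upper[of "of_int z"] binomial_gbinomial of_nat_nat)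
  then show ?thesis by simp
qed

lemma binom_poly_int_valued: "binom_poly i \<in> int_valued_polys"
  by (simp add: int_valued_polys_def of_int_gchoose_Ints)

lemma int_valued_polys_add: "p \<in> int_valued_polys \<Longrightarrow> q \<in> int_valued_polys \<Longrightarrow> p + q \<in> int_valued_polys"
  by (simp add: int_valued_polys_def)

lemma int_valued_polys_mult:
  "p \<in> int_valued_polys \<Longrightarrow> q \<in> int_valued_polys \<Longrightarrow> p * q \<in> int_valued_polys"
  by (simp add: int_valued_polys_def)

lemma int_valued_polys_uminus: "p \<in> int_valued_polys \<Longrightarrow> - p \<in> int_valued_polys"
  by (simp add: int_valued_polys_def)

lemma monom_int_valued: "monom 1 k \<in> int_valued_polys"
  by (simp add: int_valued_polys_def poly_monom)

lemma funpow_fwd_diff_int_valued: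
  "p \<in> int_valued_polys \<Longrightarrow> (fwd_diff ^^ i) p \<in> int_valued_polys"
proof (induct i)
  case (Suc i)
  have "poly ((fwd_diff ^^ i) p) (of_int (n + 1)) - poly ((fwd_diff ^^ i) p) (of_int n) \<in> \<int>" for n
    using Suc by (intro Ints_diff int_valued_polysD)
  then show ?case by (intro int_valued_polysI) simp
qed simp

lemma newton_coeff_Ints: "p \<in> int_valued_polys \<Longrightarrow> poly ((fwd_diff ^^ i) p) 0 \<in> \<int>"
  using int_valued_polysD[OF funpow_fwd_diff_int_valued, of p i 0] by simp

lemma pcompose_scale_int_valued:
  "p \<in> int_valued_polys \<Longrightarrow> y \<in> \<int> \<Longrightarrow> pcompose p [:0, y:] \<in> int_valued_polys"
proof (rule int_valued_polysI)
  fix n :: int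
  assume p: "p \<in> int_valued_polys" and "y \<in> \<int>"
  then obtain m where "y = of_int m" by (elim Ints_cases)
  then show "poly (pcompose p [:0, y:]) (of_int n) \<in> \<int>"
    using int_valued_polysD[OF p, of "m * n"] by (simp add: poly_pcompose mult.commute)
qed

lemma newton_expansion_Ints:
  assumes "\<And>i. poly ((fwd_diff ^^ i) p) 0 \<in> \<int>"
  obtains z where "p = (\<Sum>i\<le>degree p. smult (of_int (z i)) (binom_poly i))"
    and "\<And>x. poly p x = (\<Sum>i\<le>degree p. of_int (z i) * (x gchoose i))"
proof -
  have "\<forall>i. \<exists>z. poly ((fwd_diff ^^ i) p) 0 = of_int z"
    using assms by (blast elim: Ints_cases)
  then obtain z where z: "\<And>i. poly ((fwd_diff ^^ i) p) 0 = of_int (z i)" by metis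
  have p: "p = (\<Sum>i\<le>degree p. smult (of_int (z i)) (binom_poly i))"
    using newton_expansion[of p "degree p"] by (simp add: z)
  have "poly p x = (\<Sum>i\<le>degree p. of_int (z i) * (x gchoose i))" for x
    by (subst (1) p) (simp add: poly_sum)
  with p show thesis by (rule that)
qed

text \<open>Eventually integral values force integral Newton coefficients of the shifted polynomial,
  hence integral values everywhere.\<close>

lemma numerical_polys_eq_int_valued: "numerical_polys = int_valued_polys"
proof
  show "int_valued_polys \<subseteq> numerical_polys"
    unfolding numerical_polys_def int_valued_polys_def by blast
  show "numerical_polys \<subseteq> int_valued_polys"
  proof
    fix p assume "p \<in> numerical_polys"
    then obtain N :: int where N: "\<And>n::int. n \<ge> N \<Longrightarrow> poly p (of_int n) \<in> \<int>"
      unfolding numerical_polys_def by blast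
    define q where "q = pcompose p [:of_int N, 1:]"
    have q: "poly q x = poly p (of_int N + x)" for x by (simp add: q_def poly_pcompose)
    have "poly ((fwd_diff ^^ i) q) (of_nat n) \<in> \<int>" for i n
    proof (induct i arbitrary: n)
      case 0
      show ?case using N[of "N + int n"] by (simp add: q)
    next
      case (Suc i)
      have "poly ((fwd_diff ^^ i) q) (of_nat (Suc n)) - poly ((fwd_diff ^^ i) q) (of_nat n) \<in> \<int>"
        by (intro Ints_diff Suc.hyps)
      then show ?case by (simp add: add.commute)
    qed
    then have "poly ((fwd_diff ^^ i) q) 0 \<in> \<int>" for i
      using of_nat_0 by metis
    then obtain z where z: "\<And>x. poly q x = (\<Sum>i\<le>degree q. of_int (z i) * (x gchoose i))"
      using newton_expansion_Ints by blast
    show "p \<in> int_valued_polys"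
    proof (rule int_valued_polysI)
      fix m :: int
      have "poly p (of_int m) = poly q (of_int (m - N))" by (simp add: q)
      also have "\<dots> \<in> \<int>" unfolding z by (intro Ints_sum Ints_mult Ints_of_int of_int_gchoose_Ints)
      finally show "poly p (of_int m) \<in> \<int>" .
    qed
  qed
qed


section \<open>Elements of \<open>H\<close> as fractions \<open>q / t ^ k\<close>\<close>

definition over_X_pow :: "rat poly \<Rightarrow> nat \<Rightarrow> rat fls" where
  "over_X_pow q k = poly_to_laurent q * fls_X_inv ^ k"

lemma H_ring_eq: "H_ring = {over_X_pow q k | q k. q \<in> int_valued_polys}"
  unfolding H_ring_def over_X_pow_def numerical_polys_eq_int_valued by blast

lemma over_X_pow_in_H_ring: "q \<in> int_valued_polys \<Longrightarrow> over_X_pow q k \<in> H_ring"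
  unfolding H_ring_eq by blast

lemma H_ring_cases:
  assumes "f \<in> H_ring"
  obtains q k where "f = over_X_pow q k" "q \<in> int_valued_polys"
  using assms unfolding H_ring_eq by blast

lemma over_X_pow_nth:
  "over_X_pow q k $$ n = (if n + int k < 0 then 0 else coeff q (nat (n + int k)))"
  by (simp add: over_X_pow_def fls_X_inv_power_times_conv_shift(2) poly_to_laurent_def)

lemma over_X_pow_pad: "over_X_pow (q * monom 1 j) (k + j) = over_X_pow q k"
  by (rule fls_eqI) (auto simp: over_X_pow_nth coeff_monom_mult mult.commute[of q]
      intro!: arg_cong[where f = "coeff q"])

lemma over_X_pow_inj: "over_X_pow q k = over_X_pow q' k \<Longrightarrow> q = q'"
proof (rule poly_eqI)
  fix m assume "over_X_pow q k = over_X_pow q' k"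
  hence "over_X_pow q k $$ (int m - int k) = over_X_pow q' k $$ (int m - int k)" by simp
  thus "coeff q m = coeff q' m" unfolding over_X_pow_nth by simp
qed

lemma over_X_pow_eq_iff:
  "over_X_pow q k = over_X_pow q' k' \<longleftrightarrow> q * monom 1 k' = q' * monom 1 k"
  by (metis over_X_pow_inj over_X_pow_pad add.commute)

lemma poly_to_laurent_mult: "poly_to_laurent (p * q) = poly_to_laurent p * poly_to_laurent q"
  by (simp add: poly_to_laurent_def fps_of_poly_mult fls_times_fps_to_fls)

lemma poly_to_laurent_add: "poly_to_laurent (p + q) = poly_to_laurent p + poly_to_laurent q"
  by (simp add: poly_to_laurent_def fps_of_poly_add)

lemma over_X_pow_mult: "over_X_pow q k * over_X_pow q' k' = over_X_pow (q * q') (k + k')"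
  unfolding over_X_pow_def poly_to_laurent_mult power_add by (simp add: algebra_simps)

lemma over_X_pow_add_same: "over_X_pow q k + over_X_pow q' k = over_X_pow (q + q') k"
  unfolding over_X_pow_def poly_to_laurent_add by (simp add: algebra_simps)

lemma over_X_pow_add:
  "over_X_pow q k + over_X_pow q' k' = over_X_pow (q * monom 1 k' + q' * monom 1 k) (k + k')"
  by (metis over_X_pow_add_same over_X_pow_pad add.commute)

lemma over_X_pow_uminus: "- over_X_pow q k = over_X_pow (- q) k"
  by (simp add: over_X_pow_def poly_to_laurent_def fps_of_poly_uminus)

lemma over_X_pow_0 [simp]: "over_X_pow 0 k = 0"
  by (simp add: over_X_pow_def poly_to_laurent_def)

lemma over_X_pow_1 [simp]: "over_X_pow 1 0 = 1"
  by (simp add: over_X_pow_def poly_to_laurent_def)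

lemma over_X_pow_const: "over_X_pow [:c:] 0 = fls_const c"
  by (simp add: over_X_pow_def poly_to_laurent_def fps_of_poly_const)

lemma over_X_pow_X: "over_X_pow [:0, 1:] 0 = fls_X"
  by (simp add: over_X_pow_def poly_to_laurent_def)

lemma over_X_pow_X_inv: "over_X_pow 1 1 = fls_X_inv"
  by (simp add: over_X_pow_def poly_to_laurent_def)

lemma over_X_pow_eq_mult_X_inv_power: "over_X_pow q k = over_X_pow q 0 * fls_X_inv ^ k"
  by (simp add: over_X_pow_def)

lemma fls_const_mult_over_X_pow: "fls_const c * over_X_pow q k = over_X_pow (smult c q) k"
  by (metis over_X_pow_const over_X_pow_mult add_0 mult.commute mult_smult_left mult_1
      smult_one)

lemma over_X_pow_sum: "(\<Sum>i\<in>A. over_X_pow (f i) k) = over_X_pow (\<Sum>i\<in>A. f i) k"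
  by (induct A rule: infinite_finite_induct)
    (simp_all add: over_X_pow_add_same)

lemma over_X_pow_prod: "(\<Prod>i<n. over_X_pow (f i) k) = over_X_pow (\<Prod>i<n. f i) (n * k)"
  by (induct n) (simp_all add: over_X_pow_mult add.commute)

lemma of_nat_eq_over_X_pow: "(of_nat i :: rat fls) = over_X_pow ([:of_nat i:] * monom 1 k) k"
  by (metis over_X_pow_pad over_X_pow_const fls_of_nat add_0)



section \<open>\<open>H\<close> is a Hopf subalgebra\<close>

lemma over_X_pow_support:
  "{n. over_X_pow q k $$ n \<noteq> 0} \<subseteq> (\<lambda>m. int m - int k) ` {..degree q}"
proof
  fix n assume "n \<in> {n. over_X_pow q k $$ n \<noteq> 0}"
  hence h: "\<not> n + int k < 0" "coeff q (nat (n + int k)) \<noteq> 0"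
    unfolding over_X_pow_nth by (auto split: if_splits)
  hence "nat (n + int k) \<le> degree q" by (simp add: le_degree)
  moreover have "n = int (nat (n + int k)) - int k" using h by simp
  ultimately show "n \<in> (\<lambda>m. int m - int k) ` {..degree q}" by blast
qed

lemma over_X_pow_laurent_polys: "over_X_pow q k \<in> laurent_polys"
  unfolding laurent_polys_def using over_X_pow_support finite_subset by blast

lemma H_ring_subset_laurent_polys: "H_ring \<subseteq> laurent_polys"
  using over_X_pow_laurent_polys by (auto elim: H_ring_cases)

lemma subring_of_H_ring: "subring_of H_ring"
  unfolding subring_of_def H_ring_eq
proof (intro conjI ballI)
  show "(0::rat fls) \<in> {over_X_pow q k |q k. q \<in> int_valued_polys}"
    using over_X_pow_0 int_valued_polysI[of 0] by force
  show "(1::rat fls) \<in> {over_X_pow q k |q k. q \<in> int_valued_polys}"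
    unfolding mem_Collect_eq
    by (rule exI[of _ 1], rule exI[of _ 0]) (simp add: int_valued_polys_def)
  fix x y assume "x \<in> {over_X_pow q k |q k. q \<in> int_valued_polys}"
    and "y \<in> {over_X_pow q k |q k. q \<in> int_valued_polys}"
  then obtain q k q' k' where x: "x = over_X_pow q k" "q \<in> int_valued_polys"
    and y: "y = over_X_pow q' k'" "q' \<in> int_valued_polys" by blast
  show "x + y \<in> {over_X_pow q k |q k. q \<in> int_valued_polys}"
    unfolding x y over_X_pow_add
    using x y by (blast intro: int_valued_polys_add int_valued_polys_mult monom_int_valued)
  show "x * y \<in> {over_X_pow q k |q k. q \<in> int_valued_polys}"
    unfolding x y over_X_pow_mult using x y by (blast intro: int_valued_polys_mult)
  show "- x \<in> {over_X_pow q k |q k. q \<in> int_valued_polys}"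
    unfolding x over_X_pow_uminus using x by (blast intro: int_valued_polys_uminus)
qed

lemma counit_over_X_pow: "counit (over_X_pow q k) = poly q 1"
proof -
  define T where "T = (\<lambda>m. int m - int k) ` {..degree q}"
  have "counit (over_X_pow q k) = (\<Sum>n\<in>T. over_X_pow q k $$ n)"
    unfolding counit_def T_def by (rule sum.mono_neutral_left) (use over_X_pow_support in auto)
  also have "\<dots> = (\<Sum>m\<le>degree q. coeff q m)"
    unfolding T_def by (subst sum.reindex) (auto simp: inj_on_def over_X_pow_nth)
  also have "\<dots> = poly q 1" by (simp add: poly_altdef)
  finally show ?thesis .
qed

lemma counit_H_ring_Ints: "f \<in> H_ring \<Longrightarrow> counit f \<in> \<int>"
  using int_valued_polysD[of _ 1] by (auto simp: counit_over_X_pow elim: H_ring_cases)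

lemma antipode_nth: "f \<in> laurent_polys \<Longrightarrow> antipode f $$ n = f $$ (- n)"
  unfolding antipode_def laurent_polys_def
  by (rule nth_Abs_fls_finite_nonzero_neg_nth)
    (use finite_vimageI[of "{n. f $$ n \<noteq> 0}" int] in \<open>simp add: vimage_def\<close>)

lemma antipode_over_X_pow:
  "antipode (over_X_pow q k) = over_X_pow (reflect_poly q * monom 1 k) (degree q)"
  by (rule fls_eqI)
    (auto simp: antipode_nth[OF over_X_pow_laurent_polys] over_X_pow_nth coeff_monom_mult
      mult.commute[of _ "monom 1 k"] coeff_reflect_poly coeff_eq_0
      intro!: arg_cong[where f = "coeff q"])

lemma power_mult_gchoose_inverse_Ints:
  fixes x :: int
  assumes "x \<noteq> 0" and "i + fact i \<le> e"
  shows "of_int x ^ e * (inverse (of_int x) gchoose i) \<in> (\<int> :: 'a::field_char_0 set)"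
proof -
  define X where "X = (of_int x :: 'a)"
  have "X \<noteq> 0" using assms(1) by (simp add: X_def)
  have "(\<Prod>j<i. of_int 1 + of_nat j * of_int (- x)) = (\<Prod>j<i. X * (inverse X - of_nat j))"
    using \<open>X \<noteq> 0\<close> by (intro prod.cong) (simp_all add: X_def field_simps)
  also have "\<dots> = X ^ i * (\<Prod>j<i. inverse X - of_nat j)"
    by (simp add: prod.distrib)
  finally have prod:
    "X ^ i * (\<Prod>j<i. inverse X - of_nat j) = (\<Prod>j<i. of_int 1 + of_nat j * of_int (- x))" ..
  have "X ^ fact i = (-1) ^ fact i * of_int (- x) ^ fact i"
    by (simp add: X_def flip: power_mult_distrib)
  moreover have "X ^ e = X ^ (e - i - fact i) * X ^ fact i * X ^ i"
    using assms(2) by (simp flip: power_add)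
  ultimately have "X ^ e = X ^ (e - i - fact i) * (-1) ^ fact i * of_int (- x) ^ fact i * X ^ i"
    by (simp add: mult.assoc)
  hence "X ^ e * (inverse X gchoose i) = X ^ (e - i - fact i) * (-1) ^ fact i
      * (of_int (- x) ^ fact i * (X ^ i * (\<Prod>j<i. inverse X - of_nat j)) / fact i)"
    by (simp add: gbinomial_prod_rev atLeast0LessThan mult_ac)
  also have "\<dots> = X ^ (e - i - fact i) * (-1) ^ fact i
      * (of_int (- x) ^ fact i * (\<Prod>j<i. of_int 1 + of_nat j * of_int (- x)) / fact i)"
    by (simp only: prod)
  also have "\<dots> \<in> \<int>"
    by (intro Ints_mult power_mult_prod_arith_prog_div_fact_Ints) (simp_all add: X_def)
  finally show ?thesis unfolding X_def .
qed

text \<open>The antipode sends \<open>q / t ^ k\<close> to \<open>reflect_poly q * t ^ k / t ^ d\<close>, \<open>d = degree q\<close>;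
  after padding with \<open>t ^ d!\<close> the numerator takes at \<open>x \<noteq> 0\<close> the values
  \<open>x ^ (d + d!) * q(1/x)\<close>, which are integral by the previous lemma.\<close>

lemma reflect_poly_mult_monom_fact_int_valued:
  assumes q: "q \<in> int_valued_polys"
  shows "reflect_poly q * monom 1 (fact (degree q)) \<in> int_valued_polys"
proof (rule int_valued_polysI)
  fix x :: int
  show "poly (reflect_poly q * monom 1 (fact (degree q))) (of_int x) \<in> \<int>"
  proof (cases "x = 0")
    case False
    obtain z where z: "\<And>x. poly q x = (\<Sum>i\<le>degree q. of_int (z i) * (x gchoose i))"
      using newton_expansion_Ints[OF newton_coeff_Ints[OF q]] by blast
    have "poly (reflect_poly q * monom 1 (fact (degree q))) (of_int x)
        = (\<Sum>i\<le>degree q. of_int (z i)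
            * (of_int x ^ (degree q + fact (degree q)) * (inverse (of_int x) gchoose i)))"
      using False
      by (simp add: poly_reflect_poly_nz poly_monom z sum_distrib_left power_add mult_ac)
    also have "\<dots> \<in> \<int>"
      by (intro Ints_sum Ints_mult Ints_of_int power_mult_gchoose_inverse_Ints False)
        (auto intro: add_mono fact_mono)
    finally show ?thesis .
  qed (simp add: poly_monom power_0_left)
qed

lemma antipode_H_ring: "f \<in> H_ring \<Longrightarrow> antipode f \<in> H_ring"
proof (elim H_ring_cases)
  fix q k assume f: "f = over_X_pow q k" and q: "q \<in> int_valued_polys"
  have "antipode f = over_X_pow (reflect_poly q * monom 1 (fact (degree q)) * monom 1 k)
      (degree q + fact (degree q))"
    unfolding f antipode_over_X_pow
    by (metis over_X_pow_pad mult.assoc mult.commute[of "monom 1 k"])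
  then show "antipode f \<in> H_ring"
    by (simp add: over_X_pow_in_H_ring int_valued_polys_mult monom_int_valued
        reflect_poly_mult_monom_fact_int_valued[OF q])
qed


text \<open>If \<open>t ^ b = (\<Sum>i. e i b * binom t i)\<close> is the Newton expansion of a monomial, then
  \<open>p(t\<^sub>1 t\<^sub>2) = (\<Sum>i. binom t\<^sub>1 i * G p i (t\<^sub>2))\<close> with \<open>G p i (y) = (\<Sum>b. coeff p b * e i b * y ^ b)\<close>,
  and \<open>G p i\<close> is the \<open>i\<close>-th Newton coefficient of \<open>x \<mapsto> p(x y)\<close>, hence integer-valued.\<close>

definition monom_newton_coeff :: "nat \<Rightarrow> nat \<Rightarrow> rat" where
  "monom_newton_coeff i b = poly ((fwd_diff ^^ i) (monom 1 b)) 0"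

definition coprod_factor :: "rat poly \<Rightarrow> nat \<Rightarrow> rat poly" where
  "coprod_factor p i = (\<Sum>b\<le>degree p. smult (coeff p b * monom_newton_coeff i b) (monom 1 b))"

lemma coeff_coprod_factor:
  "coeff (coprod_factor p i) v = (if v \<le> degree p then coeff p v * monom_newton_coeff i v else 0)"
proof -
  have "coeff (coprod_factor p i) v
      = (\<Sum>b\<le>degree p. if b = v then coeff p b * monom_newton_coeff i b else 0)"
    unfolding coprod_factor_def coeff_sum by (intro sum.cong) (simp_all add: coeff_monom)
  then show ?thesis by simp
qed

lemma coprod_factor_int_valued:
  assumes p: "p \<in> int_valued_polys"
  shows "coprod_factor p i \<in> int_valued_polys"
proof (rule int_valued_polysI)
  fix y :: int
  have "pcompose p [:0, of_int y:] = (\<Sum>b\<le>degree p. smult (coeff p b * of_int y ^ b) (monom 1 b))"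
    by (rule poly_eq_poly_eq_iff[THEN iffD1])
      (simp add: fun_eq_iff poly_pcompose poly_altdef[of p] poly_sum poly_monom power_mult_distrib
        mult_ac)
  then have "poly (coprod_factor p i) (of_int y)
      = poly ((fwd_diff ^^ i) (pcompose p [:0, of_int y:])) 0"
    by (simp add: coprod_factor_def funpow_fwd_diff_sum_smult poly_sum poly_monom
        monom_newton_coeff_def mult_ac)
  also have "\<dots> \<in> \<int>"
    by (intro newton_coeff_Ints pcompose_scale_int_valued p) simp
  finally show "poly (coprod_factor p i) (of_int y) \<in> \<int>" .
qed

lemma sum_coeff_binom_poly_mult_coeff_coprod_factor:
  "(\<Sum>i\<le>degree p. coeff (binom_poly i) u * coeff (coprod_factor p i) v)
     = (if u = v then coeff p u else 0)"
proof (cases "v \<le> degree p")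
  case True
  have "monom 1 v = (\<Sum>i\<le>degree p. smult (monom_newton_coeff i v) (binom_poly i))"
    unfolding monom_newton_coeff_def using True
    by (intro newton_expansion) (simp add: degree_monom_eq)
  then have "(\<Sum>i\<le>degree p. monom_newton_coeff i v * coeff (binom_poly i) u) = coeff (monom 1 v) u"
    by (simp add: coeff_sum)
  moreover have "(\<Sum>i\<le>degree p. coeff (binom_poly i) u * coeff (coprod_factor p i) v)
      = coeff p v * (\<Sum>i\<le>degree p. monom_newton_coeff i v * coeff (binom_poly i) u)"
    using True by (simp add: coeff_coprod_factor sum_distrib_left mult_ac)
  ultimately show ?thesis by (simp add: coeff_monom)
qed (simp add: coeff_coprod_factor coeff_eq_0)

lemma coprod_over_X_pow:
  "coprod (over_X_pow p k)
     = (\<lambda>ij. \<Sum>i\<in>{..degree p}.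
          tensor (over_X_pow (binom_poly i) k) (over_X_pow (coprod_factor p i) k) ij)"
proof (rule ext, clarify)
  fix u v :: int
  show "coprod (over_X_pow p k) (u, v) = (\<Sum>i\<in>{..degree p}.
      tensor (over_X_pow (binom_poly i) k) (over_X_pow (coprod_factor p i) k) (u, v))"
  proof (cases "u + int k < 0 \<or> v + int k < 0")
    case False
    then have "u = v \<longleftrightarrow> nat (u + int k) = nat (v + int k)" by linarith
    then show ?thesis
      using False sum_coeff_binom_poly_mult_coeff_coprod_factor[where p = p
          and u = "nat (u + int k)" and v = "nat (v + int k)"]
      by (simp add: coprod_def tensor_def over_X_pow_nth)
  qed (auto simp: coprod_def tensor_def over_X_pow_nth)
qed

lemma coprod_H_ring: "f \<in> H_ring \<Longrightarrow> coprod f \<in> tensor_square H_ring"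
proof (elim H_ring_cases)
  fix p k assume f: "f = over_X_pow p k" and p: "p \<in> int_valued_polys"
  have "\<forall>i\<in>{..degree p}.
      over_X_pow (binom_poly i) k \<in> H_ring \<and> over_X_pow (coprod_factor p i) k \<in> H_ring"
    using binom_poly_int_valued coprod_factor_int_valued[OF p]
    by (blast intro: over_X_pow_in_H_ring)
  then show "coprod f \<in> tensor_square H_ring"
    unfolding tensor_square_def mem_Collect_eq f coprod_over_X_pow
    by (intro exI[of _ "{..degree p}"] exI[of _ "\<lambda>i. over_X_pow (binom_poly i) k"]
        exI[of _ "\<lambda>i. over_X_pow (coprod_factor p i) k"]) simp
qed

theorem hopf_subalgebra_H_ring: "hopf_subalgebra H_ring"
  unfolding hopf_subalgebra_def
  using H_ring_subset_laurent_polys subring_of_H_ring coprod_H_ring counit_H_ring_Ints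
    antipode_H_ring
  by blast


section \<open>Rational scalars in a \<open>\<rat>\<close>-algebra\<close>

text \<open>\<open>inv_nat n\<close> is unspecified unless \<open>n\<close> is invertible; \<open>binom\<close> is defined with the same
  description.\<close>

definition inv_nat :: "nat \<Rightarrow> 'a::comm_ring_1" where
  "inv_nat n = (THE u. of_nat n * u = 1)"

lemma inv_nat_eqI:
  fixes u :: "'a::comm_ring_1"
  assumes "of_nat n * u = 1"
  shows "inv_nat n = u"
  unfolding inv_nat_def
proof (rule the_equality)
  fix v :: 'a assume v: "of_nat n * v = 1"
  have "v = (u * of_nat n) * v" using assms by (simp add: mult.commute)
  also have "\<dots> = u" by (simp only: mult.assoc v mult_1_right)
  finally show "v = u" .
qed (fact assms)

lemma of_nat_mult_inv_nat:
  assumes "Q_algebra TYPE('a::comm_ring_1)" and "n > 0"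
  shows "of_nat n * (inv_nat n :: 'a) = 1"
  using assms inv_nat_eqI unfolding Q_algebra_def by metis

lemma inv_nat_mult:
  assumes "Q_algebra TYPE('a::comm_ring_1)" and "m > 0" "n > 0"
  shows "(inv_nat (m * n) :: 'a) = inv_nat m * inv_nat n"
proof (rule inv_nat_eqI)
  have "of_nat (m * n) * (inv_nat m * inv_nat n :: 'a)
      = (of_nat m * inv_nat m) * (of_nat n * inv_nat n)"
    by (simp add: mult_ac)
  then show "of_nat (m * n) * (inv_nat m * inv_nat n :: 'a) = 1"
    by (simp add: of_nat_mult_inv_nat assms)
qed

lemma binom_eq_inv_nat: "binom r n = (\<Prod>i<n. r - of_nat i) * inv_nat (fact n)"
  by (simp add: binom_def inv_nat_def)

definition rat_embed :: "rat \<Rightarrow> 'a::comm_ring_1" where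
  "rat_embed x = (case quotient_of x of (a, b) \<Rightarrow> of_int a * inv_nat (nat b))"

lemma rat_as_fraction:
  fixes x :: rat
  obtains a b where "b > 0" "x = of_int a / of_int b"
proof -
  obtain a b where "quotient_of x = (a, b)" by fastforce
  then show thesis using that quotient_of_denom_pos quotient_of_div by blast
qed

context
  assumes Q: "Q_algebra TYPE('a::comm_ring_1)"
begin

lemma of_int_mult_inv_nat: "b > 0 \<Longrightarrow> of_int b * (inv_nat (nat b) :: 'a) = 1"
  using of_nat_mult_inv_nat[OF Q, of "nat b"] by simp

lemma rat_embed_fraction:
  assumes "b > 0"
  shows "(rat_embed (of_int a / of_int b) :: 'a) = of_int a * inv_nat (nat b)"
proof -
  obtain a' b' where qo: "quotient_of (of_int a / of_int b) = (a', b')" by fastforce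
  have "b' > 0" using qo by (rule quotient_of_denom_pos)
  have "(of_int a / of_int b :: rat) = of_int a' / of_int b'" using qo by (rule quotient_of_div)
  then have "(of_int (a * b') :: rat) = of_int (a' * b)"
    using assms \<open>b' > 0\<close> by (simp add: field_simps)
  then have ab: "a * b' = a' * b" by (simp only: of_int_eq_iff)
  have "(rat_embed (of_int a / of_int b) :: 'a)
      = of_int a' * inv_nat (nat b') * (of_int b * inv_nat (nat b))"
    by (simp add: rat_embed_def qo of_int_mult_inv_nat assms)
  also have "\<dots> = of_int (a' * b) * inv_nat (nat b') * inv_nat (nat b)"
    by (simp add: mult_ac)
  also have "\<dots> = of_int a * (of_int b' * inv_nat (nat b')) * inv_nat (nat b)"
    by (simp add: mult_ac flip: ab)
  also have "\<dots> = of_int a * inv_nat (nat b)"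
    by (simp add: of_int_mult_inv_nat \<open>b' > 0\<close>)
  finally show ?thesis .
qed

lemma rat_embed_of_int [simp]: "(rat_embed (of_int z) :: 'a) = of_int z"
  using rat_embed_fraction[of 1 z] inv_nat_eqI[of 1 "1 :: 'a"] by simp

lemma rat_embed_0 [simp]: "(rat_embed 0 :: 'a) = 0"
  using rat_embed_of_int[of 0] by simp

lemma rat_embed_1 [simp]: "(rat_embed 1 :: 'a) = 1"
  using rat_embed_of_int[of 1] by simp

lemma inv_nat_nat_mult:
  "b > 0 \<Longrightarrow> d > 0 \<Longrightarrow> (inv_nat (nat (b * d)) :: 'a) = inv_nat (nat b) * inv_nat (nat d)"
  using inv_nat_mult[OF Q, of "nat b" "nat d"] by (simp add: nat_mult_distrib)

lemma rat_embed_add: "(rat_embed (x + y) :: 'a) = rat_embed x + rat_embed y"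
proof -
  obtain a b where b: "b > 0" "x = of_int a / of_int b" using rat_as_fraction by blast
  obtain c d where d: "d > 0" "y = of_int c / of_int d" using rat_as_fraction by blast
  have "x + y = of_int (a * d + c * b) / of_int (b * d)" using b d by (simp add: field_simps)
  then have "(rat_embed (x + y) :: 'a) = of_int (a * d + c * b) * inv_nat (nat (b * d))"
    using b d by (simp only:) (intro rat_embed_fraction, simp)
  also have "\<dots> = of_int a * inv_nat (nat b) * (of_int d * inv_nat (nat d))
                 + of_int c * inv_nat (nat d) * (of_int b * inv_nat (nat b))"
    using b d by (simp add: inv_nat_nat_mult algebra_simps)
  also have "\<dots> = rat_embed x + rat_embed y"
    using b d by (simp add: of_int_mult_inv_nat rat_embed_fraction)
  finally show ?thesis .
qed

lemma rat_embed_mult: "(rat_embed (x * y) :: 'a) = rat_embed x * rat_embed y"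
proof -
  obtain a b where b: "b > 0" "x = of_int a / of_int b" using rat_as_fraction by blast
  obtain c d where d: "d > 0" "y = of_int c / of_int d" using rat_as_fraction by blast
  have "x * y = of_int (a * c) / of_int (b * d)" using b d by simp
  then have "(rat_embed (x * y) :: 'a) = of_int (a * c) * inv_nat (nat (b * d))"
    using b d by (simp only:) (intro rat_embed_fraction, simp)
  also have "\<dots> = (of_int a * inv_nat (nat b)) * (of_int c * inv_nat (nat d))"
    using b d by (simp add: inv_nat_nat_mult mult_ac)
  also have "\<dots> = rat_embed x * rat_embed y"
    using b d by (simp add: rat_embed_fraction)
  finally show ?thesis .
qed

lemma rat_embed_uminus: "(rat_embed (- x) :: 'a) = - rat_embed x"
  using rat_embed_add[of "- x" x] by (simp add: eq_neg_iff_add_eq_0)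

lemma rat_embed_inverse_fact: "(rat_embed (1 / fact n) :: 'a) = inv_nat (fact n)"
proof -
  have "(1 / fact n :: rat) = of_int 1 / of_int (int (fact n))" by simp
  then show ?thesis
    using nat_int[of "fact n"] by (simp only:) (subst rat_embed_fraction, simp_all)
qed

end


section \<open>\<open>H\<close> is a binomial ring\<close>

lemma Q_algebra_fls: "Q_algebra TYPE('a::field_char_0 fls)"
  unfolding Q_algebra_def
proof (intro allI impI)
  fix n :: nat assume "n > 0"
  then have "(of_nat n :: 'a fls) * fls_const (1 / of_nat n) = 1"
    by (simp add: fls_of_nat fls_const_mult_const)
  then show "\<exists>u::'a fls. of_nat n * u = 1" by blast
qed

lemma inv_nat_fls: "(inv_nat n :: 'a::field_char_0 fls) = fls_const (1 / of_nat n)" if "n > 0"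
  using that by (intro inv_nat_eqI) (simp add: fls_of_nat fls_const_mult_const)

lemma binom_over_X_pow:
  "binom (over_X_pow q k) n
     = over_X_pow (smult (1 / fact n) (\<Prod>i<n. q - [:of_nat i:] * monom 1 k) * monom 1 (k * fact n))
         (n * k + k * fact n)"
proof -
  have "(\<Prod>i<n. over_X_pow q k - of_nat i) = (\<Prod>i<n. over_X_pow (q - [:of_nat i:] * monom 1 k) k)"
    by (intro prod.cong refl)
      (simp only: of_nat_eq_over_X_pow[of _ k] diff_conv_add_uminus over_X_pow_uminus
        over_X_pow_add_same)
  then have "binom (over_X_pow q k) n
      = over_X_pow (\<Prod>i<n. q - [:of_nat i:] * monom 1 k) (n * k) * fls_const (1 / fact n)"
    by (simp only: binom_eq_inv_nat inv_nat_fls[OF fact_gt_zero] over_X_pow_prod of_nat_fact)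
  also have "\<dots> = over_X_pow (smult (1 / fact n) (\<Prod>i<n. q - [:of_nat i:] * monom 1 k)) (n * k)"
    by (simp only: mult.commute[of _ "fls_const _"] fls_const_mult_over_X_pow)
  finally show ?thesis
    by (simp only: over_X_pow_pad)
qed

lemma binom_over_X_pow_numerator_int_valued:
  assumes q: "q \<in> int_valued_polys"
  shows "smult (1 / fact n) (\<Prod>i<n. q - [:of_nat i:] * monom 1 k) * monom 1 (k * fact n)
           \<in> int_valued_polys"
proof (rule int_valued_polysI)
  fix x :: int
  obtain a where a: "poly q (of_int x) = of_int a"
    using int_valued_polysD[OF q] by (blast elim: Ints_cases)
  have "poly (smult (1 / fact n) (\<Prod>i<n. q - [:of_nat i:] * monom 1 k) * monom 1 (k * fact n))
      (of_int x)
      = (-1) ^ fact n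
        * (of_int (- (x ^ k)) ^ fact n * (\<Prod>i<n. of_int a + of_nat i * of_int (- (x ^ k))) / fact n)"
    by (simp add: poly_prod poly_monom a power_mult mult_ac flip: power_mult_distrib)
  also have "\<dots> \<in> \<int>"
    by (intro Ints_mult power_mult_prod_arith_prog_div_fact_Ints) simp
  finally show "poly (smult (1 / fact n) (\<Prod>i<n. q - [:of_nat i:] * monom 1 k)
      * monom 1 (k * fact n)) (of_int x) \<in> \<int>" .
qed

theorem binomial_ring_H_ring: "binomial_ring H_ring"
  unfolding binomial_ring_def
proof (intro conjI ballI allI subring_of_H_ring)
  fix r n assume "r \<in> H_ring"
  then obtain q k where r: "r = over_X_pow q k" "q \<in> int_valued_polys"
    by (elim H_ring_cases)
  show "binom r n \<in> H_ring"
    unfolding r(1) binom_over_X_pow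
    by (intro over_X_pow_in_H_ring binom_over_X_pow_numerator_int_valued r(2))
qed


definition eval_rat_poly :: "'a::comm_ring_1 \<Rightarrow> rat poly \<Rightarrow> 'a" where
  "eval_rat_poly r q = (\<Sum>n\<le>degree q. rat_embed (coeff q n) * r ^ n)"

context
  fixes r :: "'a::comm_ring_1"
  assumes Q: "Q_algebra TYPE('a)"
begin

declare rat_embed_0[OF Q, simp] rat_embed_1[OF Q, simp]

lemma eval_rat_poly_eq_sum:
  "degree q < N \<Longrightarrow> eval_rat_poly r q = (\<Sum>n<N. rat_embed (coeff q n) * r ^ n)"
  unfolding eval_rat_poly_def lessThan_Suc_atMost[symmetric]
  by (rule sum.mono_neutral_left) (auto simp: coeff_eq_0)

lemma eval_rat_poly_add: "eval_rat_poly r (p + q) = eval_rat_poly r p + eval_rat_poly r q"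
proof -
  define N where "N = Suc (max (degree p) (degree q))"
  have "degree (p + q) < N" "degree p < N" "degree q < N"
    using degree_add_le_max[of p q] by (auto simp: N_def)
  then show ?thesis
    by (simp add: eval_rat_poly_eq_sum rat_embed_add[OF Q] distrib_right sum.distrib)
qed

lemma eval_rat_poly_smult: "eval_rat_poly r (smult c p) = rat_embed c * eval_rat_poly r p"
proof -
  have "eval_rat_poly r (smult c p) = (\<Sum>n<Suc (degree p). rat_embed (coeff (smult c p) n) * r ^ n)"
    by (rule eval_rat_poly_eq_sum) simp
  also have "\<dots> = rat_embed c * (\<Sum>n<Suc (degree p). rat_embed (coeff p n) * r ^ n)"
    by (simp add: rat_embed_mult[OF Q] sum_distrib_left mult.assoc del: sum.lessThan_Suc)
  also have "\<dots> = rat_embed c * eval_rat_poly r p"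
    by (subst eval_rat_poly_eq_sum[of p "Suc (degree p)"]) simp_all
  finally show ?thesis .
qed

lemma eval_rat_poly_pCons: "eval_rat_poly r (pCons a p) = rat_embed a + r * eval_rat_poly r p"
proof -
  have "eval_rat_poly r (pCons a p)
      = (\<Sum>n<Suc (Suc (degree p)). rat_embed (coeff (pCons a p) n) * r ^ n)"
    using degree_pCons_le[of a p] by (intro eval_rat_poly_eq_sum) simp
  also have "\<dots> = rat_embed a + r * (\<Sum>n<Suc (degree p). rat_embed (coeff p n) * r ^ n)"
    by (simp only: sum.lessThan_Suc_shift)
      (simp add: sum_distrib_left distrib_left mult_ac del: sum.lessThan_Suc)
  also have "\<dots> = rat_embed a + r * eval_rat_poly r p"
    by (subst eval_rat_poly_eq_sum[of p "Suc (degree p)"]) simp_all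
  finally show ?thesis .
qed

lemma eval_rat_poly_0 [simp]: "eval_rat_poly r 0 = 0"
  by (simp add: eval_rat_poly_def)

lemma eval_rat_poly_mult: "eval_rat_poly r (p * q) = eval_rat_poly r p * eval_rat_poly r q"
proof (induct p)
  case (pCons a p)
  have "eval_rat_poly r (pCons a p * q) = eval_rat_poly r (smult a q + pCons 0 (p * q))" by simp
  also have "\<dots> = rat_embed a * eval_rat_poly r q + r * (eval_rat_poly r p * eval_rat_poly r q)"
    by (simp add: eval_rat_poly_add eval_rat_poly_smult eval_rat_poly_pCons pCons(2))
  also have "\<dots> = eval_rat_poly r (pCons a p) * eval_rat_poly r q"
    by (simp add: eval_rat_poly_pCons algebra_simps)
  finally show ?case .
qed simp

lemma eval_rat_poly_const [simp]: "eval_rat_poly r [:c:] = rat_embed c"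
  using eval_rat_poly_pCons[of c 0] by simp

lemma eval_rat_poly_1 [simp]: "eval_rat_poly r 1 = 1"
  by (simp add: one_pCons)

lemma eval_rat_poly_X [simp]: "eval_rat_poly r [:0, 1:] = r"
  using eval_rat_poly_pCons[of 0 "[:1:]"] by simp

lemma eval_rat_poly_monom: "eval_rat_poly r (monom 1 k) = r ^ k"
  by (induct k) (simp_all add: monom_0 monom_Suc eval_rat_poly_pCons)

lemma eval_rat_poly_sum: "eval_rat_poly r (\<Sum>i\<in>A. f i) = (\<Sum>i\<in>A. eval_rat_poly r (f i))"
  by (induct A rule: infinite_finite_induct) (simp_all add: eval_rat_poly_add)

lemma eval_rat_poly_prod: "eval_rat_poly r (\<Prod>i\<in>A. f i) = (\<Prod>i\<in>A. eval_rat_poly r (f i))"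
  by (induct A rule: infinite_finite_induct) (simp_all add: eval_rat_poly_mult)

lemma eval_rat_poly_binom_poly: "eval_rat_poly r (binom_poly i) = binom r i"
proof -
  have "eval_rat_poly r [:- of_nat j, 1:] = r - of_nat j" for j
    using eval_rat_poly_pCons[of "- of_nat j" "[:1:]"] rat_embed_uminus[OF Q, of "of_nat j"]
      rat_embed_of_int[OF Q, of "int j"] by simp
  then show ?thesis
    by (simp add: binom_poly_def eval_rat_poly_smult eval_rat_poly_prod rat_embed_inverse_fact[OF Q]
        binom_eq_inv_nat mult.commute)
qed

end


lemma subring_of_sum: "subring_of A \<Longrightarrow> (\<And>i. i \<in> I \<Longrightarrow> f i \<in> A) \<Longrightarrow> (\<Sum>i\<in>I. f i) \<in> A"
  by (induct I rule: infinite_finite_induct) (auto simp: subring_of_def)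

lemma subring_of_prod: "subring_of A \<Longrightarrow> (\<And>i. i \<in> I \<Longrightarrow> f i \<in> A) \<Longrightarrow> (\<Prod>i\<in>I. f i) \<in> A"
  by (induct I rule: infinite_finite_induct) (auto simp: subring_of_def)

lemma subring_of_power: "subring_of A \<Longrightarrow> x \<in> A \<Longrightarrow> x ^ n \<in> A"
  using subring_of_prod[of A "{..<n}" "\<lambda>_. x"] by simp

lemma subring_of_of_nat: "subring_of A \<Longrightarrow> of_nat n \<in> A"
  using subring_of_sum[of A "{..<n}" "\<lambda>_. 1"] by (simp add: subring_of_def)

lemma subring_of_of_int: "subring_of A \<Longrightarrow> of_int z \<in> A"
  by (cases z rule: int_cases2) (auto simp: subring_of_of_nat subring_of_def)

lemma subring_of_diff: "subring_of A \<Longrightarrow> x \<in> A \<Longrightarrow> y \<in> A \<Longrightarrow> x - y \<in> A"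
  unfolding subring_of_def by (metis diff_conv_add_uminus)

lemma of_nat_fact_mult_binom:
  assumes "Q_algebra TYPE('a::comm_ring_1)"
  shows "of_nat (fact n) * binom (x :: 'a) n = (\<Prod>i<n. x - of_nat i)"
  using of_nat_mult_inv_nat[OF assms, of "fact n"]
  by (simp add: binom_eq_inv_nat mult.left_commute[of "of_nat (fact n)"])

context
  fixes A :: "'a::comm_ring_1 set" and B :: "'b::comm_ring_1 set" and \<phi> :: "'a \<Rightarrow> 'b"
  assumes A: "subring_of A" and hom: "ring_hom_on A B \<phi>"
begin

lemma ring_hom_on_add: "x \<in> A \<Longrightarrow> y \<in> A \<Longrightarrow> \<phi> (x + y) = \<phi> x + \<phi> y"
  using hom by (simp add: ring_hom_on_def)

lemma ring_hom_on_mult: "x \<in> A \<Longrightarrow> y \<in> A \<Longrightarrow> \<phi> (x * y) = \<phi> x * \<phi> y"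
  using hom by (simp add: ring_hom_on_def)

lemma ring_hom_on_0: "\<phi> 0 = 0"
  using ring_hom_on_add[of 0 0] A by (simp add: subring_of_def)

lemma ring_hom_on_uminus: "x \<in> A \<Longrightarrow> \<phi> (- x) = - \<phi> x"
  using ring_hom_on_add[of x "- x"] A
  by (simp add: subring_of_def ring_hom_on_0 eq_neg_iff_add_eq_0 add.commute)

lemma ring_hom_on_diff: "x \<in> A \<Longrightarrow> y \<in> A \<Longrightarrow> \<phi> (x - y) = \<phi> x - \<phi> y"
  using ring_hom_on_add[of x "- y"] A by (simp add: subring_of_def ring_hom_on_uminus)

lemma ring_hom_on_sum: "(\<And>i. i \<in> I \<Longrightarrow> f i \<in> A) \<Longrightarrow> \<phi> (\<Sum>i\<in>I. f i) = (\<Sum>i\<in>I. \<phi> (f i))"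
  by (induct I rule: infinite_finite_induct)
    (simp_all add: ring_hom_on_0 ring_hom_on_add subring_of_sum[OF A])

lemma ring_hom_on_prod: "(\<And>i. i \<in> I \<Longrightarrow> f i \<in> A) \<Longrightarrow> \<phi> (\<Prod>i\<in>I. f i) = (\<Prod>i\<in>I. \<phi> (f i))"
  using hom by (induct I rule: infinite_finite_induct)
    (simp_all add: ring_hom_on_def ring_hom_on_mult subring_of_prod[OF A])

lemma ring_hom_on_power: "x \<in> A \<Longrightarrow> \<phi> (x ^ n) = \<phi> x ^ n"
  using ring_hom_on_prod[of "{..<n}" "\<lambda>_. x"] by simp

lemma ring_hom_on_of_nat: "\<phi> (of_nat n) = of_nat n"
  using ring_hom_on_sum[of "{..<n}" "\<lambda>_. 1"] hom A by (simp add: ring_hom_on_def subring_of_def)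

lemma ring_hom_on_of_int: "\<phi> (of_int z) = of_int z"
  by (cases z rule: int_cases2)
    (simp_all add: ring_hom_on_of_nat ring_hom_on_uminus subring_of_of_nat[OF A])

lemma ring_hom_on_binom:
  assumes "Q_algebra TYPE('a)" "Q_algebra TYPE('b)" and "x \<in> A" "binom x n \<in> A"
  shows "\<phi> (binom x n) = binom (\<phi> x) n"
proof -
  have "of_nat (fact n) * \<phi> (binom x n) = \<phi> (of_nat (fact n) * binom x n)"
    by (simp add: ring_hom_on_mult ring_hom_on_of_nat subring_of_of_nat[OF A] assms(4))
  also have "\<dots> = \<phi> (\<Prod>i<n. x - of_nat i)"
    by (simp add: of_nat_fact_mult_binom[OF assms(1)])
  also have "\<dots> = (\<Prod>i<n. \<phi> x - of_nat i)"
    using assms(3) subring_of_of_nat[OF A]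
    by (simp add: ring_hom_on_prod ring_hom_on_diff ring_hom_on_of_nat subring_of_diff[OF A])
  finally have "inv_nat (fact n) * (of_nat (fact n) * \<phi> (binom x n)) = binom (\<phi> x) n"
    by (simp add: binom_eq_inv_nat mult.commute)
  then show ?thesis
    using of_nat_mult_inv_nat[OF assms(2), of "fact n"]
    by (simp add: mult.assoc[symmetric] mult.commute)
qed

end


section \<open>\<open>H\<close> is the free binomial ring on a unit\<close>

lemma fls_X_in_H_ring: "fls_X \<in> H_ring"
  using over_X_pow_in_H_ring[of "[:0, 1:]" 0] by (simp add: over_X_pow_X int_valued_polys_def)

lemma fls_X_inv_in_H_ring: "fls_X_inv \<in> H_ring"
  using over_X_pow_in_H_ring[of 1 1] unfolding over_X_pow_X_inv by (simp add: int_valued_polys_def)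

lemma fls_X_mult_X_inv: "fls_X * fls_X_inv = (1 :: 'a::comm_ring_1 fls)"
  by (simp add: fls_X_inv_times_conv_shift(2) fls_X_conv_shift_1)

lemma binom_fls_X: "binom fls_X n = over_X_pow (binom_poly n) 0"
proof -
  have "[:0, 1:] - [:of_nat i, 0:] = [:- of_nat i, 1 :: rat:]" for i
    by simp
  then show ?thesis
    using binom_over_X_pow[of "[:0, 1:]" 0 n] by (simp add: over_X_pow_X binom_poly_def)
qed

lemma ring_hom_on_H_ring_over_X_pow:
  fixes \<phi> :: "rat fls \<Rightarrow> 'a::comm_ring_1"
  assumes Q: "Q_algebra TYPE('a)" and hom: "ring_hom_on H_ring R \<phi>"
    and X: "\<phi> fls_X = r" and rs: "r * s = 1" and q: "q \<in> int_valued_polys"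
  shows "\<phi> (over_X_pow q k) = eval_rat_poly r q * s ^ k"
proof -
  note hom_rules = ring_hom_on_add[OF subring_of_H_ring hom]
    ring_hom_on_mult[OF subring_of_H_ring hom]
    ring_hom_on_of_int[OF subring_of_H_ring hom] ring_hom_on_power[OF subring_of_H_ring hom]
  have binom_X: "binom fls_X i \<in> H_ring" for i
    using binomial_ring_H_ring fls_X_in_H_ring by (simp add: binomial_ring_def)
  obtain z where z: "q = (\<Sum>i\<le>degree q. smult (of_int (z i)) (binom_poly i))"
    using newton_expansion_Ints[OF newton_coeff_Ints[OF q]] by blast
  have "over_X_pow q 0 = (\<Sum>i\<le>degree q. of_int (z i) * binom fls_X i)"
    by (subst z) (simp add: binom_fls_X fls_of_int fls_const_mult_over_X_pow over_X_pow_sum)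
  then have "\<phi> (over_X_pow q 0) = (\<Sum>i\<le>degree q. of_int (z i) * binom r i)"
    using binom_X by (simp add: ring_hom_on_sum[OF subring_of_H_ring hom] hom_rules
        subring_of_of_int[OF subring_of_H_ring] subring_of_H_ring[unfolded subring_of_def]
        ring_hom_on_binom[OF subring_of_H_ring hom Q_algebra_fls Q fls_X_in_H_ring] X)
  also have "\<dots> = eval_rat_poly r q"
    by (subst (2) z) (simp add: eval_rat_poly_sum eval_rat_poly_smult eval_rat_poly_binom_poly Q)
  finally have q0: "\<phi> (over_X_pow q 0) = eval_rat_poly r q" .
  have "r * \<phi> fls_X_inv = 1"
    using hom_rules(2)[OF fls_X_in_H_ring fls_X_inv_in_H_ring] hom
    by (simp add: X ring_hom_on_def fls_X_mult_X_inv)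
  then have "\<phi> fls_X_inv = s"
    using rs by (metis mult.assoc mult.commute mult_1_left)
  then show ?thesis
    using over_X_pow_in_H_ring[OF q, of 0]
    by (simp add: over_X_pow_eq_mult_X_inv_power[of q k] hom_rules fls_X_inv_in_H_ring
        subring_of_power[OF subring_of_H_ring] q0)
qed

definition H_ring_lift :: "'a::comm_ring_1 \<Rightarrow> 'a \<Rightarrow> rat fls \<Rightarrow> 'a" where
  "H_ring_lift r s f = (THE y. \<exists>q k. f = over_X_pow q k \<and> y = eval_rat_poly r q * s ^ k)"

context
  fixes r s :: "'a::comm_ring_1"
  assumes Q: "Q_algebra TYPE('a)" and rs: "r * s = 1"
begin

lemma eval_rat_poly_mult_power_eqI:
  assumes "over_X_pow q k = over_X_pow q' k'"
  shows "eval_rat_poly r q * s ^ k = eval_rat_poly r q' * s ^ k'"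
proof -
  have "q * monom 1 k' = q' * monom 1 k" using assms over_X_pow_eq_iff by blast
  then have e: "eval_rat_poly r q * r ^ k' = eval_rat_poly r q' * r ^ k"
    by (metis Q eval_rat_poly_mult eval_rat_poly_monom)
  have "eval_rat_poly r q * s ^ k = eval_rat_poly r q * s ^ k * (r * s) ^ k'" by (simp add: rs)
  also have "\<dots> = (eval_rat_poly r q * r ^ k') * s ^ (k + k')"
    by (simp add: power_mult_distrib power_add mult_ac)
  also have "\<dots> = (eval_rat_poly r q' * r ^ k) * s ^ (k + k')"
    by (simp only: e)
  also have "\<dots> = eval_rat_poly r q' * s ^ k' * (r * s) ^ k"
    by (simp add: power_mult_distrib power_add mult_ac)
  also have "\<dots> = eval_rat_poly r q' * s ^ k'" by (simp add: rs)
  finally show ?thesis .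
qed

lemma H_ring_lift_over_X_pow: "H_ring_lift r s (over_X_pow q k) = eval_rat_poly r q * s ^ k"
  unfolding H_ring_lift_def
  by (rule the_equality) (auto dest: eval_rat_poly_mult_power_eqI)

lemma H_ring_lift_fls_X: "H_ring_lift r s fls_X = r"
  using H_ring_lift_over_X_pow[of "[:0, 1:]" 0] by (simp add: over_X_pow_X Q)

lemma eval_rat_poly_int_valued_mem:
  assumes R: "binomial_ring R" and "r \<in> R" and q: "q \<in> int_valued_polys"
  shows "eval_rat_poly r q \<in> R"
proof -
  have sub: "subring_of R" using R by (simp add: binomial_ring_def)
  obtain z where z: "q = (\<Sum>i\<le>degree q. smult (of_int (z i)) (binom_poly i))"
    using newton_expansion_Ints[OF newton_coeff_Ints[OF q]] by blast
  have "eval_rat_poly r q = (\<Sum>i\<le>degree q. of_int (z i) * binom r i)"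
    by (subst z) (simp add: eval_rat_poly_sum eval_rat_poly_smult eval_rat_poly_binom_poly Q)
  also have "\<dots> \<in> R"
    using R \<open>r \<in> R\<close> sub subring_of_of_int[OF sub]
    by (intro subring_of_sum[OF sub]) (simp add: binomial_ring_def subring_of_def)
  finally show ?thesis .
qed

lemma ring_hom_on_H_ring_lift:
  assumes R: "binomial_ring R" and "r \<in> R" "s \<in> R"
  shows "ring_hom_on H_ring R (H_ring_lift r s)"
  unfolding ring_hom_on_def
proof (intro conjI ballI)
  have sub: "subring_of R" using R by (simp add: binomial_ring_def)
  fix x assume "x \<in> H_ring"
  then obtain q k where "x = over_X_pow q k" "q \<in> int_valued_polys" by (elim H_ring_cases)
  then show "H_ring_lift r s x \<in> R"
    using eval_rat_poly_int_valued_mem[OF R \<open>r \<in> R\<close>] subring_of_power[OF sub \<open>s \<in> R\<close>] sub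
    by (simp add: H_ring_lift_over_X_pow subring_of_def)
next
  show "H_ring_lift r s 1 = 1"
    using H_ring_lift_over_X_pow[of 1 0] by (simp add: Q)
next
  fix x y assume "x \<in> H_ring" "y \<in> H_ring"
  then obtain q k q' k' where x: "x = over_X_pow q k" and y: "y = over_X_pow q' k'"
    by (meson H_ring_cases)
  have rk: "r ^ j * s ^ j = 1" for j by (metis power_mult_distrib rs power_one)
  have "H_ring_lift r s (x + y)
      = (eval_rat_poly r q * r ^ k' + eval_rat_poly r q' * r ^ k) * s ^ (k + k')"
    by (simp add: x y over_X_pow_add H_ring_lift_over_X_pow Q eval_rat_poly_add eval_rat_poly_mult
        eval_rat_poly_monom)
  also have "\<dots> = eval_rat_poly r q * s ^ k * (r ^ k' * s ^ k')
      + eval_rat_poly r q' * s ^ k' * (r ^ k * s ^ k)"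
    by (simp add: power_add algebra_simps)
  finally show "H_ring_lift r s (x + y) = H_ring_lift r s x + H_ring_lift r s y"
    by (simp add: rk x y H_ring_lift_over_X_pow)
  show "H_ring_lift r s (x * y) = H_ring_lift r s x * H_ring_lift r s y"
    by (simp add: x y over_X_pow_mult H_ring_lift_over_X_pow Q eval_rat_poly_mult power_add mult_ac)
qed

end

lemma H_ring_hom_unique:
  fixes \<phi> \<psi> :: "rat fls \<Rightarrow> 'a::comm_ring_1"
  assumes Q: "Q_algebra TYPE('a)" and "r * s = 1"
    and "ring_hom_on H_ring R \<phi>" "\<phi> fls_X = r" and "ring_hom_on H_ring R' \<psi>" "\<psi> fls_X = r"
    and "h \<in> H_ring"
  shows "\<phi> h = \<psi> h"
  using \<open>h \<in> H_ring\<close>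
proof (elim H_ring_cases)
  fix q k assume h: "h = over_X_pow q k" and q: "q \<in> int_valued_polys"
  show "\<phi> h = \<psi> h"
    using ring_hom_on_H_ring_over_X_pow[OF Q assms(3,4) \<open>r * s = 1\<close> q]
      ring_hom_on_H_ring_over_X_pow[OF Q assms(5,6) \<open>r * s = 1\<close> q] h by simp
qed

theorem theorem1p3:
  shows "hopf_subalgebra H_ring \<and> Q_algebra TYPE(rat fls) \<and> binomial_ring H_ring \<and>
    (\<forall>(R::'a::comm_ring_1 set) r. Q_algebra TYPE('a) \<and> binomial_ring R \<and> r \<in> R \<and>
        (\<exists>s\<in>R. r * s = 1) \<longrightarrow>
      (\<exists>\<phi>. ring_hom_on H_ring R \<phi> \<and> \<phi> fls_X = r) \<and>
      (\<forall>\<phi> \<psi>. ring_hom_on H_ring R \<phi> \<and> \<phi> fls_X = r \<and>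
               ring_hom_on H_ring R \<psi> \<and> \<psi> fls_X = r \<longrightarrow> (\<forall>h\<in>H_ring. \<phi> h = \<psi> h)))"
proof -
  have "(\<exists>\<phi>. ring_hom_on H_ring R \<phi> \<and> \<phi> fls_X = r) \<and>
      (\<forall>\<phi> \<psi>. ring_hom_on H_ring R \<phi> \<and> \<phi> fls_X = r \<and> ring_hom_on H_ring R \<psi> \<and> \<psi> fls_X = r
        \<longrightarrow> (\<forall>h\<in>H_ring. \<phi> h = \<psi> h))"
    if "Q_algebra TYPE('a) \<and> binomial_ring R \<and> r \<in> R \<and> (\<exists>s\<in>R. r * s = 1)" for R :: "'a set" and r
  proof -
    from that obtain s where Q: "Q_algebra TYPE('a)" and R: "binomial_ring R"
      and "r \<in> R" "s \<in> R" "r * s = 1" by blast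
    then show ?thesis
      using ring_hom_on_H_ring_lift[OF Q \<open>r * s = 1\<close> R \<open>r \<in> R\<close> \<open>s \<in> R\<close>]
        H_ring_lift_fls_X[OF Q \<open>r * s = 1\<close>] H_ring_hom_unique[OF Q \<open>r * s = 1\<close>] by blast
  qed
  then show ?thesis
    using hopf_subalgebra_H_ring Q_algebra_fls binomial_ring_H_ring by blast
qed

end
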